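(* Let $A$ be a finite alphabet. Define $P,H\in I(A^* )$ by $P(u,v)=\binom{v}{u}$ and $H(u,v)=\binom{v}{u}\eta(u,v)$. Then $P=e^H$, where $e^H=\delta+H+\frac{1}{2!}H^2+\frac{1}{3!}H^3+\cdots$ (each entry of this series is a finite sum).
   Context: $A^*$ is the set of finite words over the finite alphabet $A$; $|w|$ is the length of $w$. For words $u=a_1\cdots a_k$ and $v=b_1\cdots b_n$, $\binom{v}{u}$ denotes the number of order-preserving injections $\varphi:[k]\to[n]$ with $a_i=b_{\varphi(i)}$ for all $i$ (occurrences of $u$ as a subsequence of $v$). $A^*$ is partially ordered by $u\le v$ iff $\binom{v}{u}>0$. For a locally finite poset $Q$, the incidence algebra $I(Q)$ over $\mathbb{Q}$ consists of all functions $F$ on pairs $(x,y)$ with $x\le y$, with convolution $(FG)(x,y)=\sum_{x\le z\le y}F(x,z)G(z,y)$ and identity $\delta(x,y)=[x=y]$ (Iverson bracket). $\eta(x,y)=[y\text{ covers }x]$; in $A^*$, $v$ covers $u$ iff $u\le v$ and $|v|=|u|+1$. *)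

theory Defs
  imports Complex_Main
begin

text \<open>Occurrences of u as a subsequence of v: order-preserving maps
  phi : [|u|] -> [|v|] (0-based, made extensional by phi i = 0 outside the domain)
  with u_i = v_(phi i).\<close>
definition occ_maps :: "'a list \<Rightarrow> 'a list \<Rightarrow> (nat \<Rightarrow> nat) set" where
  "occ_maps u v = {\<phi>. (\<forall>i<length u. \<phi> i < length v \<and> u ! i = v ! (\<phi> i))
                     \<and> (\<forall>i j. i < j \<and> j < length u \<longrightarrow> \<phi> i < \<phi> j)
                     \<and> (\<forall>i. length u \<le> i \<longrightarrow> \<phi> i = 0)}"

definition binom_w :: "'a list \<Rightarrow> 'a list \<Rightarrow> nat" where
  "binom_w v u = card (occ_maps u v)"   \<comment> \<open>binom_w v u = (v choose u)\<close>

definition wle :: "'a list \<Rightarrow> 'a list \<Rightarrow> bool" where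
  "wle u v \<longleftrightarrow> binom_w v u > 0"

text \<open>Incidence algebra I(A^*) over the rationals: functions on pairs (only values at
  pairs x \<le> y are relevant).\<close>
definition inc_conv :: "('a list \<Rightarrow> 'a list \<Rightarrow> rat) \<Rightarrow> ('a list \<Rightarrow> 'a list \<Rightarrow> rat)
                        \<Rightarrow> 'a list \<Rightarrow> 'a list \<Rightarrow> rat" where
  "inc_conv F G x y = (\<Sum>z\<in>{z. wle x z \<and> wle z y}. F x z * G z y)"

definition inc_delta :: "'a list \<Rightarrow> 'a list \<Rightarrow> rat" where
  "inc_delta x y = (if x = y then 1 else 0)"

fun inc_pow :: "('a list \<Rightarrow> 'a list \<Rightarrow> rat) \<Rightarrow> nat \<Rightarrow> 'a list \<Rightarrow> 'a list \<Rightarrow> rat" where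
  "inc_pow F 0 = inc_delta"
| "inc_pow F (Suc n) = inc_conv F (inc_pow F n)"

definition inc_eta :: "'a list \<Rightarrow> 'a list \<Rightarrow> rat" where
  "inc_eta u v = (if wle u v \<and> length v = length u + 1 then 1 else 0)"

definition Pmat :: "'a list \<Rightarrow> 'a list \<Rightarrow> rat" where
  "Pmat u v = of_nat (binom_w v u)"

definition Hmat :: "'a list \<Rightarrow> 'a list \<Rightarrow> rat" where
  "Hmat u v = of_nat (binom_w v u) * inc_eta u v"

end

theory Submission
  imports Defs
begin

text \<open>Occurrence counts satisfy (bv choose au) = (v choose au) + [a = b] (v choose u). From
  this recursion one shows H^k(u, v) = k! (v choose u) if |v| = |u| + k and 0 otherwise, so at
  a pair u \<le> v the exponential series has the single nonzero term k = |v| - |u|, which is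
  (v choose u) = P(u, v). The induction step for H^k is the identity
  sum over |z| = |u| + 1 of (z choose u) (v choose z) = (|v| - |u|) (v choose u).\<close>

lemma occ_mapsI:
  assumes "\<And>i. i < length u \<Longrightarrow> \<phi> i < length v \<and> u ! i = v ! \<phi> i"
    and "\<And>i j. i < j \<Longrightarrow> j < length u \<Longrightarrow> \<phi> i < \<phi> j"
    and "\<And>i. length u \<le> i \<Longrightarrow> \<phi> i = 0"
  shows "\<phi> \<in> occ_maps u v"
  using assms unfolding occ_maps_def by blast

lemma
  assumes "\<phi> \<in> occ_maps u v"
  shows occ_maps_less_length: "i < length u \<Longrightarrow> \<phi> i < length v"
    and occ_maps_nth: "i < length u \<Longrightarrow> u ! i = v ! \<phi> i"
    and occ_maps_strict_mono: "i < j \<Longrightarrow> j < length u \<Longrightarrow> \<phi> i < \<phi> j"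
    and occ_maps_beyond: "length u \<le> i \<Longrightarrow> \<phi> i = 0"
  using assms unfolding occ_maps_def by blast+

lemma occ_maps_shift:
  assumes "\<psi> \<in> occ_maps u v"
  shows "(\<lambda>i. if i < length u then Suc (\<psi> i) else 0) \<in> occ_maps u (b # v)"
  using assms by (auto intro!: occ_mapsI simp: occ_maps_less_length occ_maps_nth occ_maps_strict_mono)

lemma occ_maps_unshift:
  assumes \<phi>: "\<phi> \<in> occ_maps u (b # v)" and pos: "\<And>i. i < length u \<Longrightarrow> 0 < \<phi> i"
  shows "(\<lambda>i. \<phi> i - 1) \<in> occ_maps u v"
proof (rule occ_mapsI)
  fix i assume i: "i < length u"
  have "\<phi> i - 1 < length v"
    using pos[OF i] occ_maps_less_length[OF \<phi> i] by simp
  moreover have "u ! i = v ! (\<phi> i - 1)"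
    using occ_maps_nth[OF \<phi> i] nth_Cons_pos[OF pos[OF i]] by (rule trans)
  ultimately show "\<phi> i - 1 < length v \<and> u ! i = v ! (\<phi> i - 1)" ..
next
  fix i j assume ij: "i < j" "j < length u"
  then have "0 < \<phi> i"
    using pos by simp
  moreover have "\<phi> i < \<phi> j"
    using occ_maps_strict_mono[OF \<phi> ij] .
  ultimately show "\<phi> i - 1 < \<phi> j - 1"
    by simp
qed (simp add: occ_maps_beyond[OF \<phi>])

lemma occ_maps_Cons:
  assumes \<psi>: "\<psi> \<in> occ_maps u v"
  shows "(\<lambda>i. case i of 0 \<Rightarrow> 0 | Suc j \<Rightarrow> if j < length u then Suc (\<psi> j) else 0)
           \<in> occ_maps (a # u) (a # v)"
proof (rule occ_mapsI)
  fix i assume "i < length (a # u)"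
  then show "(case i of 0 \<Rightarrow> 0 | Suc j \<Rightarrow> if j < length u then Suc (\<psi> j) else 0) < length (a # v)
      \<and> (a # u) ! i = (a # v) ! (case i of 0 \<Rightarrow> 0 | Suc j \<Rightarrow> if j < length u then Suc (\<psi> j) else 0)"
    using occ_maps_less_length[OF \<psi>] occ_maps_nth[OF \<psi>] by (cases i) auto
next
  fix i j assume "i < j" "j < length (a # u)"
  then show "(case i of 0 \<Rightarrow> 0 | Suc j \<Rightarrow> if j < length u then Suc (\<psi> j) else 0)
      < (case j of 0 \<Rightarrow> 0 | Suc j \<Rightarrow> if j < length u then Suc (\<psi> j) else 0)"
    using occ_maps_strict_mono[OF \<psi>] by (cases i; cases j) auto
qed (auto split: nat.split)

lemma occ_maps_drop_first:
  assumes \<phi>: "\<phi> \<in> occ_maps (a # u) w"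
  shows "(\<lambda>i. \<phi> (Suc i)) \<in> occ_maps u w"
proof (rule occ_mapsI)
  fix i assume "i < length u"
  then show "\<phi> (Suc i) < length w \<and> u ! i = w ! \<phi> (Suc i)"
    using occ_maps_less_length[OF \<phi>, of "Suc i"] occ_maps_nth[OF \<phi>, of "Suc i"] by simp
qed (simp_all add: occ_maps_strict_mono[OF \<phi>] occ_maps_beyond[OF \<phi>])

lemma occ_maps_tl:
  assumes \<phi>: "\<phi> \<in> occ_maps (a # u) (b # v)" and "\<phi> 0 = 0"
  shows "(\<lambda>i. \<phi> (Suc i) - 1) \<in> occ_maps u v"
proof (rule occ_maps_unshift[OF occ_maps_drop_first[OF \<phi>]])
  fix i assume "i < length u"
  then show "0 < \<phi> (Suc i)"
    using occ_maps_strict_mono[OF \<phi>, of 0 "Suc i"] \<open>\<phi> 0 = 0\<close> by simp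
qed

lemma occ_maps_Nil: "occ_maps [] v = {\<lambda>_. 0}"
  unfolding occ_maps_def by auto

lemma occ_maps_Cons_Nil: "occ_maps (a # u) [] = {}"
  unfolding occ_maps_def by auto

lemma occ_maps_head_mismatch:
  assumes "a \<noteq> b"
  shows "{\<phi> \<in> occ_maps (a # u) (b # v). \<phi> 0 = 0} = {}"
proof -
  have "\<phi> 0 \<noteq> 0" if "\<phi> \<in> occ_maps (a # u) (b # v)" for \<phi>
  proof
    assume "\<phi> 0 = 0"
    then have "a = b"
      using occ_maps_nth[OF that, of 0] by simp
    with assms show False ..
  qed
  then show ?thesis
    by blast
qed

lemma bij_betw_occ_maps_skip_head:
  "bij_betw (\<lambda>\<psi> i. if i < length (a # u) then Suc (\<psi> i) else 0) (occ_maps (a # u) v)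
     {\<phi> \<in> occ_maps (a # u) (b # v). \<phi> 0 \<noteq> 0}"
proof (rule bij_betw_byWitness[where f' = "\<lambda>\<phi> i. \<phi> i - 1"])
  have pos: "0 < \<phi> i" if "\<phi> \<in> occ_maps (a # u) (b # v)" "\<phi> 0 \<noteq> 0" "i < length (a # u)" for \<phi> i
    using that occ_maps_strict_mono[of \<phi> "a # u" "b # v" 0 i] by (cases i) auto
  show "\<forall>\<psi>\<in>occ_maps (a # u) v. (\<lambda>i. (if i < length (a # u) then Suc (\<psi> i) else 0) - 1) = \<psi>"
    by (auto simp: fun_eq_iff occ_maps_beyond)
  show "\<forall>\<phi>\<in>{\<phi> \<in> occ_maps (a # u) (b # v). \<phi> 0 \<noteq> 0}.
          (\<lambda>i. if i < length (a # u) then Suc (\<phi> i - 1) else 0) = \<phi>"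
    using pos by (auto simp: fun_eq_iff occ_maps_beyond simp del: length_Cons)
  show "(\<lambda>\<psi> i. if i < length (a # u) then Suc (\<psi> i) else 0) ` occ_maps (a # u) v
      \<subseteq> {\<phi> \<in> occ_maps (a # u) (b # v). \<phi> 0 \<noteq> 0}"
    using occ_maps_shift[of _ "a # u" v b] by (intro image_subsetI) simp
  show "(\<lambda>\<phi> i. \<phi> i - 1) ` {\<phi> \<in> occ_maps (a # u) (b # v). \<phi> 0 \<noteq> 0} \<subseteq> occ_maps (a # u) v"
  proof (rule image_subsetI)
    fix \<phi> assume "\<phi> \<in> {\<phi> \<in> occ_maps (a # u) (b # v). \<phi> 0 \<noteq> 0}"
    then show "(\<lambda>i. \<phi> i - 1) \<in> occ_maps (a # u) v"
      using pos[of \<phi>] by (intro occ_maps_unshift) simp_all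
  qed
qed

lemma bij_betw_occ_maps_match_head:
  "bij_betw (\<lambda>\<psi> i. case i of 0 \<Rightarrow> 0 | Suc j \<Rightarrow> if j < length u then Suc (\<psi> j) else 0)
     (occ_maps u v) {\<phi> \<in> occ_maps (a # u) (a # v). \<phi> 0 = 0}"
proof (rule bij_betw_byWitness[where f' = "\<lambda>\<phi> i. \<phi> (Suc i) - 1"])
  have pos: "0 < \<phi> (Suc j)" if "\<phi> \<in> occ_maps (a # u) (a # v)" "\<phi> 0 = 0" "j < length u" for \<phi> j
    using that occ_maps_strict_mono[of \<phi> "a # u" "a # v" 0 "Suc j"] by simp
  show "\<forall>\<psi>\<in>occ_maps u v.
          (\<lambda>i. (case Suc i of 0 \<Rightarrow> 0 | Suc j \<Rightarrow> if j < length u then Suc (\<psi> j) else 0) - 1) = \<psi>"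
    by (auto simp: fun_eq_iff occ_maps_beyond)
  show "\<forall>\<phi>\<in>{\<phi> \<in> occ_maps (a # u) (a # v). \<phi> 0 = 0}.
          (\<lambda>i. case i of 0 \<Rightarrow> 0 | Suc j \<Rightarrow> if j < length u then Suc (\<phi> (Suc j) - 1) else 0) = \<phi>"
    using pos by (auto simp: fun_eq_iff occ_maps_beyond split: nat.split)
  show "(\<lambda>\<psi> i. case i of 0 \<Rightarrow> 0 | Suc j \<Rightarrow> if j < length u then Suc (\<psi> j) else 0) ` occ_maps u v
      \<subseteq> {\<phi> \<in> occ_maps (a # u) (a # v). \<phi> 0 = 0}"
    by (rule image_subsetI) (simp add: occ_maps_Cons)
  show "(\<lambda>\<phi> i. \<phi> (Suc i) - 1) ` {\<phi> \<in> occ_maps (a # u) (a # v). \<phi> 0 = 0} \<subseteq> occ_maps u v"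
    using occ_maps_tl[of _ a u a v] by (intro image_subsetI) simp
qed

fun subword_count :: "'a list \<Rightarrow> 'a list \<Rightarrow> nat" where
  "subword_count v [] = 1"
| "subword_count [] (a # u) = 0"
| "subword_count (b # v) (a # u) =
     subword_count v (a # u) + (if a = b then subword_count v u else 0)"

lemma finite_card_occ_maps: "finite (occ_maps u v) \<and> card (occ_maps u v) = subword_count v u"
proof (induction v u rule: subword_count.induct)
  case (3 b v a u)
  let ?S = "occ_maps (a # u) (b # v)"
  let ?M = "{\<phi> \<in> ?S. \<phi> 0 = 0}" and ?N = "{\<phi> \<in> ?S. \<phi> 0 \<noteq> 0}"
  note skip = bij_betw_occ_maps_skip_head[of a u v b]
  have N: "finite ?N" "card ?N = subword_count v (a # u)"
    using bij_betw_finite[OF skip] bij_betw_same_card[OF skip] "3.IH"(1) by simp_all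
  have M: "finite ?M \<and> card ?M = (if a = b then subword_count v u else 0)"
  proof (cases "a = b")
    case True
    note match = bij_betw_occ_maps_match_head[of u v a]
    show ?thesis
      using bij_betw_finite[OF match] bij_betw_same_card[OF match] "3.IH"(2)[OF True] True
      by simp
  next
    case False
    then show ?thesis
      by (simp add: occ_maps_head_mismatch)
  qed
  have S: "?M \<union> ?N = ?S"
    by blast
  have "finite ?S"
    using M N finite_UnI[of ?M ?N] unfolding S by simp
  moreover have "card ?S = card ?M + card ?N"
    using M N card_Un_disjoint[of ?M ?N] unfolding S by blast
  ultimately show ?case
    using M N by simp
qed (simp_all add: occ_maps_Nil occ_maps_Cons_Nil)

lemma binom_w_eq_subword_count: "binom_w v u = subword_count v u"
  unfolding binom_w_def using finite_card_occ_maps by blast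

lemma subword_count_Nil_left: "subword_count [] u = of_bool (u = [])"
  by (cases u) auto

lemma subword_count_Cons_left:
  "subword_count (b # v) u = subword_count v u
     + (case u of [] \<Rightarrow> 0 | a # u' \<Rightarrow> if a = b then subword_count v u' else 0)"
  by (cases u) auto

lemma subword_count_eq_0: "length v < length u \<Longrightarrow> subword_count v u = 0"
  by (induction v u rule: subword_count.induct) auto

lemma subword_count_same_length:
  "length v = length u \<Longrightarrow> subword_count v u = of_bool (v = u)"
  by (induction v u rule: subword_count.induct) (auto simp: subword_count_eq_0)

lemma finite_words_length: "finite {z :: 'a::finite list. length z = n}"
  using finite_lists_length_eq[of "UNIV :: 'a set" n] by simp

lemma sum_words_length_Suc:
  fixes f :: "'a::finite list \<Rightarrow> 'b::comm_monoid_add"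
  shows "(\<Sum>z | length z = Suc n. f z) = (\<Sum>c\<in>UNIV. \<Sum>z | length z = n. f (c # z))"
proof -
  have "{z. length z = Suc n} = (\<lambda>(c, z). c # z) ` (UNIV \<times> {z. length z = n})"
    by (auto simp: length_Suc_conv)
  then have "(\<Sum>z | length z = Suc n. f z) = sum f ((\<lambda>(c, z). c # z) ` (UNIV \<times> {z. length z = n}))"
    by (rule arg_cong)
  also have "\<dots> = (\<Sum>(c, z) \<in> UNIV \<times> {z. length z = n}. f (c # z))"
    by (subst sum.reindex) (auto simp: inj_on_def intro!: sum.cong)
  also have "\<dots> = (\<Sum>c\<in>UNIV. \<Sum>z | length z = n. f (c # z))"
    by (rule sum.cartesian_product[symmetric])
  finally show ?thesis .
qed

lemma sum_mult_subword_count_Cons: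
  fixes g :: "'a::finite list \<Rightarrow> nat"
  shows "(\<Sum>z | length z = Suc n. g z * subword_count (b # v) z)
           = (\<Sum>z | length z = Suc n. g z * subword_count v z)
             + (\<Sum>z | length z = n. g (b # z) * subword_count v z)"
proof -
  have "g (c # z) * subword_count (b # v) (c # z)
      = g (c # z) * subword_count v (c # z) + (if c = b then g (b # z) * subword_count v z else 0)"
    for c z
    by (simp add: distrib_left)
  then show ?thesis
    unfolding sum_words_length_Suc[of _ n] by (simp add: sum.distrib) (subst sum.swap, simp)
qed

lemma sum_subword_count_Cons_same_length:
  fixes u v :: "'a::finite list"
  shows "(\<Sum>z | length z = length u. subword_count (b # z) u * subword_count v z)
           = subword_count v u
             + (case u of [] \<Rightarrow> 0 | a # u' \<Rightarrow> if a = b then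
                  (\<Sum>z | length z = Suc (length u'). subword_count z u' * subword_count v z) else 0)"
proof -
  have "subword_count (b # z) u = of_bool (z = u)
      + (case u of [] \<Rightarrow> 0 | a # u' \<Rightarrow> if a = b then subword_count z u' else 0)"
    if "length z = length u" for z
    using that by (simp add: subword_count_Cons_left subword_count_same_length)
  then have "(\<Sum>z | length z = length u. subword_count (b # z) u * subword_count v z)
      = (\<Sum>z | length z = length u. if z = u then subword_count v z else 0)
        + (\<Sum>z | length z = length u.
             (case u of [] \<Rightarrow> 0 | a # u' \<Rightarrow> if a = b then subword_count z u' else 0)
               * subword_count v z)"
    unfolding sum.distrib[symmetric] by (intro sum.cong) (auto simp: distrib_right)
  then show ?thesis
    by (cases u) (simp_all add: finite_words_length)
qed

text \<open>A pair of occurrences of u in z and of z in v, with z one letter longer than u, is an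
  occurrence of u in v together with one of the remaining positions of v; hence the sum
  equals (length v - length u) * subword_count v u, stated here without subtraction.\<close>
lemma sum_subword_count_length_Suc:
  fixes u v :: "'a::finite list"
  shows "(\<Sum>z | length z = Suc (length u). subword_count z u * subword_count v z)
           + length u * subword_count v u = length v * subword_count v u"
proof (induction v arbitrary: u)
  case Nil
  have "subword_count [] z = 0" if "length z = Suc n" for z :: "'a list" and n
    using that by (auto simp: subword_count_Nil_left)
  then show ?case
    by (simp add: subword_count_Nil_left)
next
  case (Cons b v)
  define S where "S w = (\<Sum>z | length z = Suc (length w). subword_count z w * subword_count v z)"
    for w :: "'a list"
  have IH: "S w + length w * subword_count v w = length v * subword_count v w" for w
    using Cons.IH unfolding S_def .
  have step: "(\<Sum>z | length z = Suc (length u). subword_count z u * subword_count (b # v) z)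
      = S u + subword_count v u + (case u of [] \<Rightarrow> 0 | a # u' \<Rightarrow> if a = b then S u' else 0)"
    using sum_mult_subword_count_Cons[of "\<lambda>z. subword_count z u" b v "length u"]
      sum_subword_count_Cons_same_length[where u = u and v = v and b = b]
    unfolding S_def by simp
  show ?case
  proof (cases u)
    case Nil
    then show ?thesis
      using step IH[of u] by simp
  next
    case (Cons a u')
    then show ?thesis
      using step IH[of u] IH[of u'] by (cases "a = b") (simp_all add: algebra_simps)
  qed
qed

lemma wle_iff_subword_count: "wle u v \<longleftrightarrow> 0 < subword_count v u"
  by (simp add: wle_def binom_w_eq_subword_count)

lemma wle_length_le: "wle u v \<Longrightarrow> length u \<le> length v"
  using subword_count_eq_0[of v u] by (force simp: wle_iff_subword_count)

lemma finite_wle_interval: "finite {z :: 'a::finite list. wle x z \<and> wle z y}"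
proof (rule finite_subset)
  show "{z. wle x z \<and> wle z y} \<subseteq> {z. set z \<subseteq> UNIV \<and> length z \<le> length y}"
    by (auto dest: wle_length_le)
qed (rule finite_lists_length_le, simp)

lemma Hmat_eq: "Hmat u z = (if length z = Suc (length u) then of_nat (subword_count z u) else 0)"
  by (simp add: Hmat_def inc_eta_def binom_w_eq_subword_count wle_iff_subword_count)

lemma inc_pow_Hmat:
  fixes u v :: "'a::finite list"
  shows "inc_pow Hmat k u v
           = (if length v = length u + k then of_nat (fact k * subword_count v u) else 0)"
proof (induction k arbitrary: u)
  case 0
  then show ?case by (auto simp: inc_delta_def subword_count_same_length)
next
  case (Suc k)
  let ?f = "\<lambda>z. Hmat u z * inc_pow Hmat k z v"
  let ?I = "{z. wle u z \<and> wle z v}" and ?Z = "{z. length z = Suc (length u)}"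
  let ?c = "\<lambda>z. subword_count z u * subword_count v z"
  have f: "?f z = (if z \<in> ?Z \<and> length v = length u + Suc k then of_nat (fact k * ?c z) else 0)" for z
    by (simp add: Hmat_eq Suc.IH)
  have "inc_pow Hmat (Suc k) u v = (\<Sum>z\<in>?I. ?f z)"
    by (simp add: inc_conv_def)
  also have "\<dots> = (\<Sum>z\<in>?I \<inter> ?Z. ?f z)"
    by (rule sum.mono_neutral_right) (auto simp: finite_wle_interval f)
  also have "\<dots> = (\<Sum>z\<in>?Z. ?f z)"
    by (rule sum.mono_neutral_left) (auto simp: finite_words_length f wle_iff_subword_count)
  also have "\<dots> = (if length v = length u + Suc k then of_nat (fact k * sum ?c ?Z) else 0)"
    by (simp add: f sum_distrib_left)
  also have "\<dots> = (if length v = length u + Suc k then of_nat (fact (Suc k) * subword_count v u) else 0)"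
  proof (cases "length v = length u + Suc k")
    case True
    then have "sum ?c ?Z + length u * subword_count v u
        = length u * subword_count v u + Suc k * subword_count v u"
      using sum_subword_count_length_Suc[of u v] by (simp only: add_mult_distrib)
    then show ?thesis
      using True by (simp add: algebra_simps)
  qed simp
  finally show ?case .
qed

theorem mainTheorem2:
  fixes u v :: "'a::finite list"
  assumes "wle u v"
  shows "finite {k. inc_pow (Hmat :: 'a list \<Rightarrow> 'a list \<Rightarrow> rat) k u v \<noteq> 0}
       \<and> Pmat u v = (\<Sum>k\<in>{k. inc_pow (Hmat :: 'a list \<Rightarrow> 'a list \<Rightarrow> rat) k u v \<noteq> 0}.
                        inc_pow Hmat k u v / fact k)"
proof -
  have pos: "0 < subword_count v u"
    using assms by (simp add: wle_iff_subword_count)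
  have le: "length u \<le> length v"
    using assms by (rule wle_length_le)
  have "{k. inc_pow (Hmat :: 'a list \<Rightarrow> 'a list \<Rightarrow> rat) k u v \<noteq> 0} = {length v - length u}"
    using pos le by (auto simp: inc_pow_Hmat)
  then show ?thesis
    using le by (simp add: inc_pow_Hmat Pmat_def binom_w_eq_subword_count)
qed

end
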